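(* Let $m\ge1$ and $0\le r<q-1$. Then there exists a codeword $\mathbf{c}\in RM_q(r,m)$ such that $w_1(\mathbf{c})=d_1(RM_q(r,m))$ and $\chi_1(\mathbf{c})$ is a successive subset of $\mathbb{Z}_{q^m}$ with $1\notin\chi_1(\mathbf{c})$ unless $\chi_1(\mathbf{c})=\mathbb{Z}_{q^m}$.
   Context: Fix an enumeration $\mathbb{F}_q=\{\alpha_1=0,\alpha_2,\dots,\alpha_q\}$ and order $\mathbb{F}_q$ by $\alpha_1<\dots<\alpha_q$; order $\mathbb{F}_q^m$ lexicographically as $P_1<\dots<P_{q^m}$. $RM_q(r,m)=\{(f(P_1),\dots,f(P_{q^m})) : f\in\mathbb{F}_q[X_1,\dots,X_m],\ \deg f\le r\}$. $\mathbb{Z}_L=\{1,\dots,L\}$ with indices cyclic mod $L$. $\chi_1(\mathbf{c})$ is the Hamming support of $\mathbf{c}$ and $w_1$ the Hamming weight. For $J\subseteq\mathbb{Z}_L$, a hole of $J$ of size $h\ge1$ is a set $\{a+1,\dots,a+h\}\subseteq\mathbb{Z}_L\setminus J$ (indices mod $L$) with $a,a+h+1\in J$; $J$ is a successive subset if it has at most one hole. *)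

theory Defs
  imports Main "HOL-Library.Cardinality"
begin

text \<open>Positions are 1-indexed: Z_L = {1..L}. Cyclic reduction of an index into {1..L}.\<close>
definition cyc :: "nat \<Rightarrow> nat \<Rightarrow> nat" where
  "cyc L i = ((i + L - 1) mod L) + 1"

definition is_hole :: "nat \<Rightarrow> nat set \<Rightarrow> nat set \<Rightarrow> bool" where
  "is_hole L J H \<longleftrightarrow> (\<exists>a h. a \<in> {1..L} \<and> h \<ge> 1 \<and> a \<in> J \<and> cyc L (a + h + 1) \<in> J \<and>
      H = (\<lambda>i. cyc L (a + i)) ` {1..h} \<and> H \<subseteq> {1..L} - J)"

definition successive :: "nat \<Rightarrow> nat set \<Rightarrow> bool" where
  "successive L J \<longleftrightarrow> J \<subseteq> {1..L} \<and> card {H. is_hole L J H} \<le> 1"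

definition supp1 :: "nat \<Rightarrow> (nat \<Rightarrow> 'a::zero) \<Rightarrow> nat set" where
  "supp1 L c = {j \<in> {1..L}. c j \<noteq> 0}"

definition w1 :: "nat \<Rightarrow> (nat \<Rightarrow> 'a::zero) \<Rightarrow> nat" where
  "w1 L c = card (supp1 L c)"

definition d1 :: "nat \<Rightarrow> (nat \<Rightarrow> 'a::zero) set \<Rightarrow> nat" where
  "d1 L C = Min {w1 L c | c. c \<in> C \<and> supp1 L c \<noteq> {}}"

text \<open>The j-th point P_j of F_q^m in lexicographic order w.r.t. the enumeration alpha_1<...<alpha_q
  (alpha indexed by {1..q}); coordinates indexed by {1..m}, X_1 most significant.\<close>
definition lexpt :: "(nat \<Rightarrow> 'a::zero) \<Rightarrow> nat \<Rightarrow> nat \<Rightarrow> nat \<Rightarrow> nat \<Rightarrow> 'a" where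
  "lexpt alpha q m j = (\<lambda>k. if k \<in> {1..m} then alpha ((j - 1) div q ^ (m - k) mod q + 1) else 0)"

definition mexps :: "nat \<Rightarrow> nat \<Rightarrow> (nat \<Rightarrow> nat) set" where
  "mexps m r = {e. (\<forall>k. k \<notin> {1..m} \<longrightarrow> e k = 0) \<and> (\<Sum>k\<in>{1..m}. e k) \<le> r}"

definition peval :: "nat \<Rightarrow> nat \<Rightarrow> ((nat \<Rightarrow> nat) \<Rightarrow> 'a::comm_ring_1) \<Rightarrow> (nat \<Rightarrow> 'a) \<Rightarrow> 'a" where
  "peval m r cf x = (\<Sum>e\<in>mexps m r. cf e * (\<Prod>k\<in>{1..m}. x k ^ e k))"

definition RM :: "(nat \<Rightarrow> 'a::{finite,field}) \<Rightarrow> nat \<Rightarrow> nat \<Rightarrow> (nat \<Rightarrow> 'a) set" where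
  "RM alpha r m = {(\<lambda>j. if j \<in> {1..card (UNIV::'a set) ^ m}
        then peval m r cf (lexpt alpha (card (UNIV::'a set)) m j) else 0) | cf. True}"

end

theory Submission
  imports Defs "HOL-Computational_Algebra.Polynomial"
begin

text \<open>A nonzero polynomial of total degree at most r < q in m variables over F_q is nonzero
  at no fewer than (q - r) q^(m-1) points: write it in powers of the last variable, with top
  power t; above every nonzero of the top coefficient, which has degree at most r - t, at least
  q - t values of the last variable survive, and (q - (r - t)) (q - t) \<ge> (q - r) q.
  The bound is attained by the product of the X_1 - alpha_i for i = 1, ..., r. Since X_1 is the
  most significant coordinate of the lexicographic order, this polynomial vanishes exactly on the
  first r blocks of q^(m-1) positions, so its support is a final segment of Z_(q^m): cyclically
  its only hole is {1, ..., r q^(m-1)}, and it contains 1 only when r = 0.\<close>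

definition points :: "nat \<Rightarrow> (nat \<Rightarrow> 'a::zero) set" where
  "points m = {x. \<forall>k. k \<notin> {1..m} \<longrightarrow> x k = 0}"

text \<open>\<open>polyfun m r F\<close>: F is a polynomial function of total degree at most r in x_1, ..., x_m,
  presented in powers of x_m so that the degree bound is available for induction on m.\<close>

fun polyfun :: "nat \<Rightarrow> nat \<Rightarrow> ((nat \<Rightarrow> 'a::comm_ring_1) \<Rightarrow> 'a) \<Rightarrow> bool" where
  "polyfun 0 r F \<longleftrightarrow> (\<exists>c. \<forall>x. F x = c)"
| "polyfun (Suc m) r F \<longleftrightarrow>
     (\<exists>g. (\<forall>i\<le>r. polyfun m (r - i) (g i)) \<and> (\<forall>x. F x = (\<Sum>i\<le>r. x (Suc m) ^ i * g i x)))"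

lemma polyfun_eq_on_coords:
  assumes "polyfun m r F" "\<forall>k\<in>{1..m}. x k = y k"
  shows "F x = F y"
  using assms
proof (induction m arbitrary: r F)
  case (Suc m)
  then obtain g where g: "\<forall>i\<le>r. polyfun m (r - i) (g i)" "\<forall>x. F x = (\<Sum>i\<le>r. x (Suc m) ^ i * g i x)"
    by auto
  have "g i x = g i y" if "i \<le> r" for i
    using Suc.IH[of "r - i" "g i"] g(1) that Suc.prems(2) by auto
  moreover have "x (Suc m) = y (Suc m)" using Suc.prems(2) by auto
  ultimately show ?case using g(2) by simp
qed auto

lemma polyfun_0: "polyfun m r (\<lambda>_. 0)"
  by (induction m arbitrary: r) (auto intro!: exI[of _ "\<lambda>_ _. 0"])

lemma polyfun_add:
  assumes "polyfun m r F" "polyfun m r G"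
  shows "polyfun m r (\<lambda>x. F x + G x)"
  using assms
proof (induction m arbitrary: r F G)
  case (Suc m)
  obtain g where g: "\<forall>i\<le>r. polyfun m (r - i) (g i)" "\<forall>x. F x = (\<Sum>i\<le>r. x (Suc m) ^ i * g i x)"
    using Suc.prems by auto
  obtain h where h: "\<forall>i\<le>r. polyfun m (r - i) (h i)" "\<forall>x. G x = (\<Sum>i\<le>r. x (Suc m) ^ i * h i x)"
    using Suc.prems by auto
  show ?case
    using g h Suc.IH by (auto simp: distrib_left sum.distrib intro!: exI[of _ "\<lambda>i x. g i x + h i x"])
qed auto

lemma polyfun_cmult:
  assumes "polyfun m r F"
  shows "polyfun m r (\<lambda>x. c * F x)"
  using assms
proof (induction m arbitrary: r F)
  case (Suc m)
  obtain g where g: "\<forall>i\<le>r. polyfun m (r - i) (g i)" "\<forall>x. F x = (\<Sum>i\<le>r. x (Suc m) ^ i * g i x)"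
    using Suc.prems by auto
  show ?case
    using g Suc.IH by (auto simp: sum_distrib_left mult.left_commute intro!: exI[of _ "\<lambda>i x. c * g i x"])
qed auto

lemma polyfun_sum:
  assumes "\<And>e. e \<in> S \<Longrightarrow> polyfun m r (f e)"
  shows "polyfun m r (\<lambda>x. \<Sum>e\<in>S. f e x)"
proof (cases "finite S")
  case True
  then show ?thesis using assms
    by (induction S rule: finite_induct) (auto intro: polyfun_add simp: polyfun_0)
qed (simp add: polyfun_0)

lemma polyfun_monomial:
  assumes "(\<Sum>k\<in>{1..m}. e k) \<le> r"
  shows "polyfun m r (\<lambda>x::nat \<Rightarrow> 'a::comm_ring_1. \<Prod>k\<in>{1..m}. x k ^ e k)"
  using assms
proof (induction m arbitrary: r)
  case (Suc m)
  define t where "t = e (Suc m)"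
  have "(\<Sum>k\<in>{1..Suc m}. e k) = (\<Sum>k\<in>{1..m}. e k) + t" by (simp add: t_def)
  then have t: "t \<le> r" and IH: "polyfun m (r - t) (\<lambda>x::nat \<Rightarrow> 'a. \<Prod>k\<in>{1..m}. x k ^ e k)"
    using Suc by auto
  show ?case
    apply (simp only: polyfun.simps)
    apply (rule exI[of _ "\<lambda>i x. if i = t then \<Prod>k\<in>{1..m}. x k ^ e k else 0"])
    apply (intro conjI allI impI)
    subgoal for i using IH by (cases "i = t") (auto simp: polyfun_0)
    subgoal using t by (simp add: t_def if_distrib cong: if_cong)
    done
qed auto

lemma polyfun_peval: "polyfun m r (peval m r cf)"
  unfolding peval_def[abs_def]
  by (intro polyfun_sum polyfun_cmult polyfun_monomial) (auto simp: mexps_def)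

lemma finite_points: "finite (points m :: (nat \<Rightarrow> 'a::{finite,zero}) set)"
proof -
  have "points m = {x :: nat \<Rightarrow> 'a. \<forall>k. (k \<in> {1..m} \<longrightarrow> x k \<in> UNIV) \<and> (k \<notin> {1..m} \<longrightarrow> x k = 0)}"
    by (auto simp: points_def)
  then show ?thesis by (simp only: finite_set_of_finite_funs finite_atLeastAtMost finite)
qed

lemma card_points_Suc:
  fixes P :: "(nat \<Rightarrow> 'a::{finite,zero}) \<Rightarrow> bool"
  shows "card {x \<in> points (Suc m). P x} = (\<Sum>y\<in>points m. card {a. P (y(Suc m := a))})"
proof -
  let ?ext = "\<lambda>(y, a). y(Suc m := a)" and ?S = "SIGMA y:points m. {a. P (y(Suc m := a))}"
  have "bij_betw ?ext ?S {x \<in> points (Suc m). P x}"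
  proof (rule bij_betwI')
    fix u v assume "u \<in> ?S" "v \<in> ?S"
    then show "(?ext u = ?ext v) = (u = v)"
      by (cases u; cases v) (auto simp: points_def fun_eq_iff split: if_splits)
  next
    fix x assume "x \<in> {x \<in> points (Suc m). P x}"
    then have "(x(Suc m := 0), x (Suc m)) \<in> ?S" by (auto simp: points_def)
    then show "\<exists>u\<in>?S. x = ?ext u" by (intro bexI[of _ "(x(Suc m := 0), x (Suc m))"]) auto
  qed (auto simp: points_def)
  then show ?thesis
    by (simp add: bij_betw_same_card[symmetric] finite_points)
qed

lemma card_nonroots_ge:
  fixes c :: "nat \<Rightarrow> 'a::{finite,idom}"
  assumes "c t \<noteq> 0"
  shows "CARD('a) - t \<le> card {a. (\<Sum>i\<le>t. a ^ i * c i) \<noteq> 0}"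
proof -
  define p where "p = (\<Sum>i\<le>t. monom (c i) i)"
  have poly_p: "poly p a = (\<Sum>i\<le>t. a ^ i * c i)" for a
    by (simp add: p_def poly_sum poly_monom mult.commute)
  have "coeff p t = c t" by (simp add: p_def coeff_sum coeff_monom)
  then have "card {a. poly p a = 0} \<le> degree p"
    using assms by (intro card_poly_roots_bound) auto
  also have "degree p \<le> t"
    unfolding p_def by (intro degree_sum_le) (auto intro: order_trans[OF degree_monom_le])
  finally have "card {a. poly p a = 0} \<le> t" .
  moreover have "{a. poly p a \<noteq> 0} = UNIV - {a. poly p a = 0}" by auto
  ultimately show ?thesis
    by (simp add: poly_p[symmetric] card_Diff_subset)
qed

lemma polyfun_Suc_top_coeff:
  fixes F :: "(nat \<Rightarrow> 'a::comm_ring_1) \<Rightarrow> 'a"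
  assumes F: "polyfun (Suc m) r F" and nz: "\<exists>x\<in>points (Suc m). F x \<noteq> 0"
  obtains t g where "t \<le> r" "polyfun m (r - t) (g t)" "\<exists>y\<in>points m. g t y \<noteq> 0"
    "\<And>y a. y \<in> points m \<Longrightarrow> F (y(Suc m := a)) = (\<Sum>i\<le>t. a ^ i * g i y)"
proof -
  obtain g where g: "\<forall>i\<le>r. polyfun m (r - i) (g i)" "\<forall>x. F x = (\<Sum>i\<le>r. x (Suc m) ^ i * g i x)"
    using F by auto
  have g_upd: "g i (y(Suc m := a)) = g i y" if "i \<le> r" for i y a
    using polyfun_eq_on_coords[of m "r - i" "g i"] g(1) that by auto
  define Z where "Z = {i. i \<le> r \<and> (\<exists>y\<in>points m. g i y \<noteq> 0)}"
  have "Z \<noteq> {}"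
  proof
    assume Z: "Z = {}"
    obtain x where x: "x \<in> points (Suc m)" "F x \<noteq> 0" using nz by auto
    then have "(\<Sum>i\<le>r. x (Suc m) ^ i * g i x) \<noteq> 0" using g(2) by simp
    then obtain i where i: "i \<le> r" "g i x \<noteq> 0"
      by (rule sum.not_neutral_contains_not_neutral) (metis atMost_iff mult_zero_right)
    have "x(Suc m := 0) \<in> points m" using x by (auto simp: points_def)
    moreover have "g i (x(Suc m := 0)) = g i x" using g_upd[OF i(1), of x 0] by simp
    ultimately show False using Z i unfolding Z_def by auto
  qed
  moreover have "finite Z" unfolding Z_def by auto
  ultimately have t: "Max Z \<in> Z" and above: "\<And>i. i \<in> Z \<Longrightarrow> i \<le> Max Z" by auto
  have vanish: "g i y = 0" if "Max Z < i" "i \<le> r" "y \<in> points m" for i y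
  proof (rule ccontr)
    assume "g i y \<noteq> 0"
    then have "i \<in> Z" using that unfolding Z_def by auto
    then show False using above[of i] that(1) by simp
  qed
  show thesis
  proof
    show "Max Z \<le> r" "polyfun m (r - Max Z) (g (Max Z))" "\<exists>y\<in>points m. g (Max Z) y \<noteq> 0"
      using t g(1) unfolding Z_def by auto
    fix y :: "nat \<Rightarrow> 'a" and a :: 'a
    assume y: "y \<in> points m"
    have "F (y(Suc m := a)) = (\<Sum>i\<le>r. a ^ i * g i y)" using g(2) g_upd by simp
    also have "\<dots> = (\<Sum>i\<le>Max Z. a ^ i * g i y)"
      using \<open>Max Z \<le> r\<close> vanish y by (intro sum.mono_neutral_right) auto
    finally show "F (y(Suc m := a)) = (\<Sum>i\<le>Max Z. a ^ i * g i y)" .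
  qed
qed

lemma diff_mult_le_diff_mult_diff:
  fixes q r t :: nat
  assumes "t \<le> r" "r < q"
  shows "(q - r) * q \<le> (q - (r - t)) * (q - t)"
proof -
  define u v where "u = r - t" and "v = q - r - 1"
  then have r: "r = t + u" and q: "q = t + u + v + 1" using assms by arith+
  have "(v + 1) * (t + u + v + 1) \<le> (t + v + 1) * (u + v + 1)"
    by (simp add: algebra_simps)
  then show ?thesis using r q by simp
qed

lemma card_nonzeros_polyfun_ge:
  fixes F :: "(nat \<Rightarrow> 'a::{finite,idom}) \<Rightarrow> 'a"
  assumes "polyfun m r F" "r < CARD('a)" "\<exists>x\<in>points m. F x \<noteq> 0"
  shows "(CARD('a) - r) * CARD('a) ^ m \<le> CARD('a) * card {x\<in>points m. F x \<noteq> 0}"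
  using assms
proof (induction m arbitrary: r F)
  case 0
  then have "1 \<le> card {x\<in>points 0. F x \<noteq> 0}"
    by (auto simp: Suc_le_eq card_gt_0_iff finite_points)
  then have "CARD('a) * 1 \<le> CARD('a) * card {x\<in>points 0. F x \<noteq> 0}"
    by (rule mult_le_mono2)
  then show ?case by (simp only: power_0 mult_1_right)
next
  case (Suc m)
  let ?q = "CARD('a)"
  obtain t g where t: "t \<le> r" and g_t: "polyfun m (r - t) (g t)" "\<exists>y\<in>points m. g t y \<noteq> 0"
    and F: "\<And>y a. y \<in> points m \<Longrightarrow> F (y(Suc m := a)) = (\<Sum>i\<le>t. a ^ i * g i y)"
    using polyfun_Suc_top_coeff[OF Suc.prems(1,3)] by blast
  define Y where "Y = {y\<in>points m. g t y \<noteq> 0}"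
  have IH: "(?q - (r - t)) * ?q ^ m \<le> ?q * card Y"
    unfolding Y_def using Suc.IH[OF g_t(1) _ g_t(2)] Suc.prems(2) by simp
  have "card Y * (?q - t) = (\<Sum>y\<in>Y. ?q - t)" by simp
  also have "\<dots> \<le> (\<Sum>y\<in>Y. card {a. F (y(Suc m := a)) \<noteq> 0})"
  proof (rule sum_mono)
    fix y assume "y \<in> Y"
    then show "?q - t \<le> card {a. F (y(Suc m := a)) \<noteq> 0}"
      using card_nonroots_ge[of "\<lambda>i. g i y" t] F unfolding Y_def by simp
  qed
  also have "\<dots> \<le> (\<Sum>y\<in>points m. card {a. F (y(Suc m := a)) \<noteq> 0})"
    by (intro sum_mono2 finite_points) (auto simp: Y_def)
  also have "\<dots> = card {x\<in>points (Suc m). F x \<noteq> 0}"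
    by (rule card_points_Suc[symmetric])
  finally have fibres: "card Y * (?q - t) \<le> card {x\<in>points (Suc m). F x \<noteq> 0}" .
  have "(?q - r) * ?q ^ Suc m = ((?q - r) * ?q) * ?q ^ m" by simp
  also have "\<dots> \<le> ((?q - (r - t)) * (?q - t)) * ?q ^ m"
    using diff_mult_le_diff_mult_diff[OF t Suc.prems(2)] by simp
  also have "\<dots> = ((?q - (r - t)) * ?q ^ m) * (?q - t)" by simp
  also have "\<dots> \<le> ?q * (card Y * (?q - t))" using IH by (simp add: mult.assoc)
  also have "\<dots> \<le> ?q * card {x\<in>points (Suc m). F x \<noteq> 0}" using fibres by simp
  finally show ?case .
qed

lemma lexpt_in_points: "lexpt alpha q m j \<in> points m"
  by (simp add: lexpt_def points_def)

lemma lexpt_Suc: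
  assumes "j \<ge> 1"
  shows "lexpt alpha q (Suc m) j =
    (lexpt alpha q m ((j - 1) div q + 1))(Suc m := alpha ((j - 1) mod q + 1))"
proof
  fix k
  show "lexpt alpha q (Suc m) j k =
    ((lexpt alpha q m ((j - 1) div q + 1))(Suc m := alpha ((j - 1) mod q + 1))) k"
  proof (cases "k \<in> {1..m}")
    case True
    then have "(j - 1) div q ^ (Suc m - k) = (j - 1) div q div q ^ (m - k)"
      by (simp add: Suc_diff_le div_mult2_eq)
    then show ?thesis using True by (simp add: lexpt_def)
  qed (cases "k = Suc m"; auto simp: lexpt_def)
qed

lemma lexpt_Suc_digit:
  assumes "j \<ge> 1" "d < q"
  shows "lexpt alpha q (Suc m) ((j - 1) * q + d + 1) = (lexpt alpha q m j)(Suc m := alpha (d + 1))"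
proof -
  have "((j - 1) * q + d) div q = j - 1" and "((j - 1) * q + d) mod q = d"
    using assms(2) by auto
  then show ?thesis using lexpt_Suc[of "(j - 1) * q + d + 1" alpha q m] assms(1) by simp
qed

lemma lexpt_image:
  fixes alpha :: "nat \<Rightarrow> 'a::zero"
  assumes bij: "bij_betw alpha {1..q} UNIV"
  shows "lexpt alpha q m ` {1..q ^ m} = points m"
proof
  show "lexpt alpha q m ` {1..q ^ m} \<subseteq> points m" using lexpt_in_points by blast
  show "points m \<subseteq> lexpt alpha q m ` {1..q ^ m}"
  proof
    fix x :: "nat \<Rightarrow> 'a" assume "x \<in> points m"
    then show "x \<in> lexpt alpha q m ` {1..q ^ m}"
    proof (induction m arbitrary: x)
      case 0
      then have "lexpt alpha q 0 1 = x" by (auto simp: lexpt_def points_def)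
      then show ?case by (intro image_eqI[of _ _ 1]) auto
    next
      case (Suc m)
      have "x(Suc m := 0) \<in> points m" using Suc.prems by (auto simp: points_def)
      then have "x(Suc m := 0) \<in> lexpt alpha q m ` {1..q ^ m}" by (rule Suc.IH)
      then obtain j' where j': "j' \<in> {1..q ^ m}" "lexpt alpha q m j' = x(Suc m := 0)"
        by (metis imageE)
      have "x (Suc m) \<in> alpha ` {1..q}" using bij by (simp add: bij_betw_def)
      then obtain s where s: "s \<in> {1..q}" "alpha s = x (Suc m)" by auto
      define d where "d = s - 1"
      have d: "d < q" "alpha (d + 1) = x (Suc m)" using s unfolding d_def by auto
      define j where "j = (j' - 1) * q + d + 1"
      have "j \<le> (j' - 1) * q + q" using d(1) unfolding j_def by simp
      also have "\<dots> = j' * q" using j'(1) by (cases j') auto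
      also have "\<dots> \<le> q ^ Suc m" using j'(1) by (simp add: mult.commute)
      finally have "j \<in> {1..q ^ Suc m}" unfolding j_def by auto
      moreover have "lexpt alpha q (Suc m) j = x"
        using lexpt_Suc_digit[of j' d q alpha m] j' d unfolding j_def by auto
      ultimately show ?case by blast
    qed
  qed
qed

lemma RM_weight_ge:
  fixes alpha :: "nat \<Rightarrow> 'a::{finite,field}"
  assumes bij: "bij_betw alpha {1..CARD('a)} UNIV" and "m \<ge> 1" and "r < CARD('a)"
    and "c \<in> RM alpha r m" and nonzero: "supp1 (CARD('a) ^ m) c \<noteq> {}"
  shows "(CARD('a) - r) * CARD('a) ^ (m - 1) \<le> w1 (CARD('a) ^ m) c"
proof -
  let ?q = "CARD('a)"
  obtain cf where c: "c = (\<lambda>j. if j \<in> {1..?q ^ m} then peval m r cf (lexpt alpha ?q m j) else 0)"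
    using \<open>c \<in> RM alpha r m\<close> unfolding RM_def by blast
  let ?F = "peval m r cf" and ?P = "lexpt alpha ?q m"
  have supp: "supp1 (?q ^ m) c = {j \<in> {1..?q ^ m}. ?F (?P j) \<noteq> 0}"
    unfolding supp1_def c by auto
  have nonzeros: "{x \<in> points m. ?F x \<noteq> 0} = ?P ` supp1 (?q ^ m) c"
    unfolding supp lexpt_image[OF bij, of m, symmetric] by auto
  have "(?q - r) * ?q ^ m \<le> ?q * card {x \<in> points m. ?F x \<noteq> 0}"
    using nonzero nonzeros by (intro card_nonzeros_polyfun_ge polyfun_peval \<open>r < ?q\<close>) blast
  also have "card {x \<in> points m. ?F x \<noteq> 0} \<le> w1 (?q ^ m) c"
    unfolding nonzeros w1_def by (rule card_image_le) (simp add: supp1_def)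
  finally have "?q * ((?q - r) * ?q ^ (m - 1)) \<le> ?q * w1 (?q ^ m) c"
    using \<open>m \<ge> 1\<close> by (cases m) (simp_all add: algebra_simps)
  then show ?thesis by simp
qed

lemma d1_eqI:
  assumes "c \<in> C" "supp1 L c \<noteq> {}"
    and "\<And>c'. c' \<in> C \<Longrightarrow> supp1 L c' \<noteq> {} \<Longrightarrow> w1 L c \<le> w1 L c'"
  shows "d1 L C = w1 L c"
  unfolding d1_def
proof (rule Min_eqI)
  have "w1 L c' \<le> card {1..L}" for c' :: "nat \<Rightarrow> 'a"
    unfolding w1_def by (rule card_mono) (auto simp: supp1_def)
  then have "{w1 L c' |c'. c' \<in> C \<and> supp1 L c' \<noteq> {}} \<subseteq> {..card {1..L}}" by blast
  then show "finite {w1 L c' |c'. c' \<in> C \<and> supp1 L c' \<noteq> {}}"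
    by (rule finite_subset) simp
  show "w1 L c \<in> {w1 L c' |c'. c' \<in> C \<and> supp1 L c' \<noteq> {}}" using assms(1,2) by blast
  fix w assume "w \<in> {w1 L c' |c'. c' \<in> C \<and> supp1 L c' \<noteq> {}}"
  then show "w1 L c \<le> w" using assms(3) by blast
qed

lemma cyc_eq_self: "i \<in> {1..L} \<Longrightarrow> cyc L i = i"
  unfolding cyc_def by (cases i) auto

lemma cyc_add_period: "cyc L (L + i) = cyc L i"
  unfolding cyc_def by (cases "i + L") (auto simp: add.commute)

lemma hole_of_final_segment:
  assumes "s < L" and hole: "is_hole L {s+1..L} H"
  shows "H = {1..s}"
proof -
  obtain a h where a: "a \<in> {1..L}" "h \<ge> 1" "a \<in> {s+1..L}" "cyc L (a + h + 1) \<in> {s+1..L}"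
    and H: "H = (\<lambda>i. cyc L (a + i)) ` {1..h}" "H \<subseteq> {1..L} - {s+1..L}"
    using hole unfolding is_hole_def by blast
  have H_le: "H \<subseteq> {1..s}" using H(2) by auto
  have "a = L"
  proof (rule ccontr)
    assume "a \<noteq> L"
    then have "cyc L (a + 1) = a + 1" using a(1) by (intro cyc_eq_self) auto
    moreover have "cyc L (a + 1) \<in> H" unfolding H(1) using a(2) by (intro image_eqI[of _ _ 1]) auto
    ultimately show False using H_le a(3) by auto
  qed
  have cyc_L: "cyc L (L + i) = i" if "i \<in> {1..L}" for i
    using that by (simp add: cyc_add_period cyc_eq_self)
  have "h \<le> s"
  proof (rule ccontr)
    assume "\<not> h \<le> s"
    then have "cyc L (L + (s + 1)) \<in> H"
      unfolding H(1) \<open>a = L\<close> by (intro image_eqI[of _ _ "s + 1"]) auto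
    then show False using cyc_L[of "s + 1"] \<open>s < L\<close> H_le by auto
  qed
  then have "H = {1..h}"
    unfolding H(1) \<open>a = L\<close> using \<open>s < L\<close> cyc_L by (auto simp: image_iff)
  moreover have "h + 1 \<in> {s+1..L}"
    using a(4) cyc_L[of "h + 1"] \<open>h \<le> s\<close> \<open>s < L\<close> \<open>a = L\<close> by (simp add: add.assoc)
  ultimately show ?thesis using \<open>h \<le> s\<close> by auto
qed

lemma successive_final_segment:
  assumes "s < L"
  shows "successive L {s+1..L}"
proof -
  have "card {H. is_hole L {s+1..L} H} \<le> card {{1..s}}"
    using hole_of_final_segment[OF assms] by (intro card_mono) auto
  then show ?thesis unfolding successive_def by auto
qed

lemma finite_mexps: "finite (mexps m r)"
proof (rule finite_subset)
  show "mexps m r \<subseteq> {e. \<forall>k. (k \<in> {1..m} \<longrightarrow> e k \<in> {..r}) \<and> (k \<notin> {1..m} \<longrightarrow> e k = 0)}"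
  proof clarify
    fix e k assume e: "e \<in> mexps m r"
    have "k \<in> {1..m} \<Longrightarrow> e k \<le> (\<Sum>k\<in>{1..m}. e k)" by (rule member_le_sum) auto
    then show "(k \<in> {1..m} \<longrightarrow> e k \<in> {..r}) \<and> (k \<notin> {1..m} \<longrightarrow> e k = 0)"
      using e unfolding mexps_def by auto
  qed
qed (rule finite_set_of_finite_funs; simp)

definition univariate_cf :: "'a::comm_ring_1 poly \<Rightarrow> (nat \<Rightarrow> nat) \<Rightarrow> 'a" where
  "univariate_cf p e = (if \<forall>k. k \<noteq> 1 \<longrightarrow> e k = 0 then coeff p (e 1) else 0)"

lemma univariate_mexps:
  assumes "m \<ge> 1"
  shows "{e \<in> mexps m r. \<forall>k. k \<noteq> 1 \<longrightarrow> e k = 0} = (\<lambda>i k. if k = 1 then i else 0) ` {..r}"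
proof
  show "(\<lambda>i k. if k = 1 then i else 0) ` {..r} \<subseteq> {e \<in> mexps m r. \<forall>k. k \<noteq> 1 \<longrightarrow> e k = 0}"
    using assms by (auto simp: mexps_def if_distrib cong: if_cong)
  show "{e \<in> mexps m r. \<forall>k. k \<noteq> 1 \<longrightarrow> e k = 0} \<subseteq> (\<lambda>i k. if k = 1 then i else 0) ` {..r}"
  proof clarify
    fix e assume e: "e \<in> mexps m r" "\<forall>k. k \<noteq> 1 \<longrightarrow> e k = 0"
    have "e 1 \<le> (\<Sum>k\<in>{1..m}. e k)" using assms by (intro member_le_sum) auto
    then have "e 1 \<le> r" using e(1) by (auto simp: mexps_def)
    moreover have "e = (\<lambda>k. if k = 1 then e 1 else 0)" using e(2) by (auto simp: fun_eq_iff)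
    ultimately show "e \<in> (\<lambda>i k. if k = 1 then i else 0) ` {..r}"
      by (intro image_eqI[of _ _ "e 1"]) auto
  qed
qed

lemma peval_univariate_cf:
  assumes "m \<ge> 1" "degree p \<le> r"
  shows "peval m r (univariate_cf p) x = poly p (x 1)"
proof -
  let ?E = "\<lambda>i k. if k = 1 then i else (0::nat)"
  let ?term = "\<lambda>e. univariate_cf p e * (\<Prod>k\<in>{1..m}. x k ^ e k)"
  have "peval m r (univariate_cf p) x = sum ?term {e \<in> mexps m r. \<forall>k. k \<noteq> 1 \<longrightarrow> e k = 0}"
    unfolding peval_def by (rule sum.mono_neutral_right) (auto simp: finite_mexps univariate_cf_def)
  also have "\<dots> = (\<Sum>i\<le>r. ?term (?E i))"
    unfolding univariate_mexps[OF \<open>m \<ge> 1\<close>]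
    by (rule sum.reindex[unfolded comp_def]) (auto simp: inj_on_def fun_eq_iff)
  also have "\<dots> = (\<Sum>i\<le>r. coeff p i * x 1 ^ i)"
    using \<open>m \<ge> 1\<close> by (intro sum.cong) (auto simp: univariate_cf_def if_distrib cong: if_cong)
  also have "\<dots> = poly p (x 1)"
    unfolding poly_altdef using \<open>degree p \<le> r\<close>
    by (intro sum.mono_neutral_right) (auto simp: coeff_eq_0)
  finally show ?thesis .
qed

lemma lexpt_first_coord:
  assumes "m \<ge> 1" "j \<in> {1..q ^ m}"
  shows "lexpt alpha q m j 1 = alpha ((j - 1) div q ^ (m - 1) + 1)"
proof -
  have "j - 1 < q * q ^ (m - 1)" using assms by (cases m) auto
  then have "(j - 1) div q ^ (m - 1) < q" by (rule less_mult_imp_div_less)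
  then show ?thesis using assms(1) by (simp add: lexpt_def)
qed

lemma poly_prod_linear_eq_0_iff:
  fixes alpha :: "nat \<Rightarrow> 'a::idom"
  assumes "inj_on alpha A" "B \<subseteq> A" "finite B" "s \<in> A"
  shows "poly (\<Prod>i\<in>B. [:- alpha i, 1:]) (alpha s) = 0 \<longleftrightarrow> s \<in> B"
  using assms by (auto simp: poly_prod inj_on_eq_iff subsetD)

lemma RM_univariate_codeword:
  fixes alpha :: "nat \<Rightarrow> 'a::{finite,field}" and p :: "'a poly"
  assumes "m \<ge> 1" "degree p \<le> r"
  shows "\<exists>c \<in> RM alpha r m. supp1 (CARD('a) ^ m) c =
    {j \<in> {1..CARD('a) ^ m}. poly p (alpha ((j - 1) div CARD('a) ^ (m - 1) + 1)) \<noteq> 0}"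
proof -
  let ?q = "CARD('a)"
  define c where "c = (\<lambda>j. if j \<in> {1..?q ^ m}
    then peval m r (univariate_cf p) (lexpt alpha ?q m j) else 0)"
  have "c j = poly p (alpha ((j - 1) div ?q ^ (m - 1) + 1))" if j: "j \<in> {1..?q ^ m}" for j
  proof -
    have "c j = peval m r (univariate_cf p) (lexpt alpha ?q m j)" using j by (simp add: c_def)
    also have "\<dots> = poly p (lexpt alpha ?q m j 1)" using assms by (rule peval_univariate_cf)
    also have "\<dots> = poly p (alpha ((j - 1) div ?q ^ (m - 1) + 1))"
      by (simp only: lexpt_first_coord[OF \<open>m \<ge> 1\<close> j])
    finally show ?thesis .
  qed
  then have "supp1 (?q ^ m) c =
      {j \<in> {1..?q ^ m}. poly p (alpha ((j - 1) div ?q ^ (m - 1) + 1)) \<noteq> 0}"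
    unfolding supp1_def by auto
  moreover have "c \<in> RM alpha r m" unfolding RM_def c_def by blast
  ultimately show ?thesis by blast
qed

lemma RM_final_segment_codeword:
  fixes alpha :: "nat \<Rightarrow> 'a::{finite,field}"
  assumes bij: "bij_betw alpha {1..CARD('a)} UNIV" and "m \<ge> 1" and "r < CARD('a)"
  shows "\<exists>c \<in> RM alpha r m.
    supp1 (CARD('a) ^ m) c = {r * CARD('a) ^ (m - 1) + 1..CARD('a) ^ m}"
proof -
  let ?q = "CARD('a)"
  let ?Q = "?q ^ (m - 1)"
  define p :: "'a poly" where "p = (\<Prod>i\<in>{1..r}. [:- alpha i, 1:])"
  have "degree p \<le> r"
    unfolding p_def using degree_prod_sum_le[of "{1..r}" "\<lambda>i. [:- alpha i, 1:]"] by simp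
  have nonzero_iff: "poly p (alpha ((j - 1) div ?Q + 1)) \<noteq> 0 \<longleftrightarrow> r * ?Q + 1 \<le> j"
    if j: "j \<in> {1..?q ^ m}" for j
  proof -
    have "j - 1 < ?q * ?Q" using j \<open>m \<ge> 1\<close> by (cases m) auto
    then have "(j - 1) div ?Q < ?q" by (rule less_mult_imp_div_less)
    then have "poly p (alpha ((j - 1) div ?Q + 1)) \<noteq> 0 \<longleftrightarrow> (j - 1) div ?Q + 1 \<notin> {1..r}"
      unfolding p_def using bij \<open>r < ?q\<close>
      by (subst poly_prod_linear_eq_0_iff[of alpha "{1..?q}"]) (auto simp: bij_betw_def)
    also have "\<dots> \<longleftrightarrow> r * ?Q \<le> j - 1"
      using less_eq_div_iff_mult_less_eq[of ?Q r "j - 1"] by auto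
    finally show ?thesis using j by auto
  qed
  obtain c where c: "c \<in> RM alpha r m"
    and supp: "supp1 (?q ^ m) c = {j \<in> {1..?q ^ m}. poly p (alpha ((j - 1) div ?Q + 1)) \<noteq> 0}"
    using RM_univariate_codeword[OF \<open>m \<ge> 1\<close> \<open>degree p \<le> r\<close>] by blast
  note supp
  also have "\<dots> = {j \<in> {1..?q ^ m}. r * ?Q + 1 \<le> j}" using nonzero_iff by blast
  also have "\<dots> = {r * ?Q + 1..?q ^ m}" by auto
  finally show ?thesis using c by blast
qed

theorem mainTheorem8:
  fixes alpha :: "nat \<Rightarrow> 'a::{finite,field}" and r m :: nat
  assumes "bij_betw alpha {1..CARD('a)} UNIV" and "alpha 1 = 0"
    and "m \<ge> 1" and "r < CARD('a) - 1"
  shows "\<exists>c \<in> RM alpha r m.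
     w1 (CARD('a) ^ m) c = d1 (CARD('a) ^ m) (RM alpha r m) \<and>
     successive (CARD('a) ^ m) (supp1 (CARD('a) ^ m) c) \<and>
     (supp1 (CARD('a) ^ m) c \<noteq> {1..CARD('a) ^ m} \<longrightarrow> 1 \<notin> supp1 (CARD('a) ^ m) c)"
proof -
  let ?q = "CARD('a)" and ?Q = "CARD('a) ^ (m - 1)"
  have "r < ?q" using assms(4) by linarith
  obtain c where c: "c \<in> RM alpha r m" and supp: "supp1 (?q ^ m) c = {r * ?Q + 1..?q ^ m}"
    using RM_final_segment_codeword[OF assms(1,3) \<open>r < ?q\<close>] by blast
  have q_pow: "?q ^ m = ?q * ?Q" using \<open>m \<ge> 1\<close> by (cases m) auto
  have weight: "w1 (?q ^ m) c = (?q - r) * ?Q"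
    unfolding w1_def supp by (simp add: q_pow diff_mult_distrib)
  have "r * ?Q < ?q ^ m" using \<open>r < ?q\<close> q_pow by simp
  then have "supp1 (?q ^ m) c \<noteq> {}" unfolding supp by simp
  then have "d1 (?q ^ m) (RM alpha r m) = w1 (?q ^ m) c"
    using c RM_weight_ge[OF assms(1,3) \<open>r < ?q\<close>] weight by (intro d1_eqI) auto
  moreover have "successive (?q ^ m) (supp1 (?q ^ m) c)"
    unfolding supp using \<open>r * ?Q < ?q ^ m\<close> by (rule successive_final_segment)
  moreover have "1 \<notin> supp1 (?q ^ m) c" if "supp1 (?q ^ m) c \<noteq> {1..?q ^ m}"
    using that unfolding supp by auto
  ultimately show ?thesis using c by auto
qed

end
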